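(* Let $\mathcal E=\{p_1,\dots,p_n\}\subseteq\mathbb K[x,y_1,\dots,y_n]$ (regarded as a vector of polynomials), let $\bar\sigma=(\sigma_1,\dots,\sigma_n)\in\Sigma^n$ be a stream solution of $\mathcal E$, and let $\bar r_0=\bar\sigma(0)$. Then $$\big(\nabla^{\eth}_{\bar y}\mathcal E\big)(X,\bar r_0,\bar\sigma)\cdot\bar\sigma'^{T}+\Big(\frac{\eth\mathcal E}{\eth x}(X,\bar\sigma)\Big)^{T}=0 .$$
   Context: Streams $\Sigma=\mathbb K^\omega$ over a field $\mathbb K$ of characteristic $0$ with pointwise sum, convolution product $(\sigma\times\tau)(i)=\sum_{j=0}^{i}\sigma(j)\tau(i-j)$, $X=(0,1,0,\dots)$, scalars as $(r,0,0,\dots)$, stream derivative $\sigma'(i)=\sigma(i+1)$. A stream solution of a finite set $\mathcal E$ of polynomials is $\bar\sigma\in\Sigma^n$ with $p(X,\bar\sigma)=0$ for all $p\in\mathcal E$ (substituting $x\mapsto X$, $y_i\mapsto\sigma_i$). Syntactic stream derivative of $p\in\mathbb K[x,\bar y]$: with new indeterminates $y_{0i},y_i'$, $y_0:=x$, $y_{00}:=0$, order $y_0<\dots<y_n$, $\min(m)$ the least variable of monomial $m\ne1$: $(1)'=0$, $(x)'=1$, $(y_i)'=y_i'$, $(y_im)'=y_i'm+y_{0i}(m)'$ when $m\ne1$, $y_i=\min(y_im)$, extended linearly. Writing uniquely $p'=q_0+\sum_i q_iy_i'$ with $q_j\in\mathbb K[x,\bar y_0,\bar y]$, set $\frac{\eth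 p}{\eth x}:=q_0$ (a polynomial in $x,\bar y$ only) and $\frac{\eth p}{\eth y_i}:=q_i$. $\nabla^{\eth}_{\bar y}\mathcal E$ is the $n\times n$ matrix whose $i$-th row is $(\frac{\eth p_i}{\eth y_1},\dots,\frac{\eth p_i}{\eth y_n})$, and $\frac{\eth\mathcal E}{\eth x}:=(\frac{\eth p_1}{\eth x},\dots,\frac{\eth p_n}{\eth x})$. Evaluation at $(X,\bar r_0,\bar\sigma)$ substitutes $x\mapsto X$, $y_{0i}\mapsto r_{0i}$, $y_i\mapsto\sigma_i$. *)

theory Defs
  imports "HOL-Library.Multiset" "HOL-Library.Poly_Mapping"
          "HOL-Computational_Algebra.Formal_Power_Series"
begin

text \<open>Streams K^omega with pointwise sum and convolution product are the formal power
series 'a fps (fps_nth gives the i-th entry, fps_X is X, fps_const r is the scalar r).\<close>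

definition sderiv :: "'a fps \<Rightarrow> 'a fps" where
  "sderiv \<sigma> = Abs_fps (\<lambda>i. fps_nth \<sigma> (i + 1))"

text \<open>Polynomials in K[x,y_1,...,y_n]: variable 0 is x, variable i (i >= 1) is y_i;
monomials are multisets of variables, polynomials finitely supported coefficient maps.\<close>

type_synonym 'a mpoly = "nat multiset \<Rightarrow>\<^sub>0 'a"

definition pvars :: "'a::zero mpoly \<Rightarrow> nat set" where
  "pvars p = (\<Union>m\<in>Poly_Mapping.keys p. set_mset m)"

text \<open>Extended variables: x, y_i, y_{0i}, y_i'.\<close>
datatype evar = VX | VY nat | VY0 nat | VYd nat

type_synonym 'a epoly = "evar multiset \<Rightarrow>\<^sub>0 'a"

definition evar_of :: "nat \<Rightarrow> evar" where
  "evar_of i = (if i = 0 then VX else VY i)"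

definition emono :: "nat list \<Rightarrow> 'a::comm_ring_1 epoly" where
  "emono vs = Poly_Mapping.single (mset (map evar_of vs)) 1"

definition dvar :: "nat \<Rightarrow> 'a::comm_ring_1 epoly" where
  "dvar i = (if i = 0 then Poly_Mapping.single {#} 1 else Poly_Mapping.single {#VYd i#} 1)"

definition y0var :: "nat \<Rightarrow> 'a::comm_ring_1 epoly" where
  "y0var i = (if i = 0 then 0 else Poly_Mapping.single {#VY0 i#} 1)"

text \<open>Syntactic stream derivative of a monomial, given as the list of its variables
sorted increasingly (so the head is min(m)).\<close>
fun dmono :: "nat list \<Rightarrow> 'a::comm_ring_1 epoly" where
  "dmono [] = 0"
| "dmono [v] = dvar v"
| "dmono (v # w # vs) = dvar v * emono (w # vs) + y0var v * dmono (w # vs)"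

definition sderiv_poly :: "'a::comm_ring_1 mpoly \<Rightarrow> 'a epoly" where
  "sderiv_poly p = (\<Sum>m\<in>Poly_Mapping.keys p.
      Poly_Mapping.single {#} (Poly_Mapping.lookup p m) * dmono (sorted_list_of_multiset m))"

definition is_EYd :: "evar \<Rightarrow> bool" where
  "is_EYd v = (\<exists>i. v = VYd i)"

text \<open>Writing p' = q_0 + sum_i q_i y_i': q_0 collects the monomials without any y',
q_i the monomials containing y_i' exactly once and no other y' (with y_i' removed).\<close>
definition eth_x :: "'a::comm_ring_1 mpoly \<Rightarrow> 'a epoly" where
  "eth_x p = (let q = sderiv_poly p in
     (\<Sum>m\<in>Poly_Mapping.keys q. if (\<forall>v\<in>#m. \<not> is_EYd v) then Poly_Mapping.single m (Poly_Mapping.lookup q m) else 0))"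

definition eth_y :: "'a::comm_ring_1 mpoly \<Rightarrow> nat \<Rightarrow> 'a epoly" where
  "eth_y p i = (let q = sderiv_poly p in
     (\<Sum>m\<in>Poly_Mapping.keys q. if count m (VYd i) = 1 \<and> (\<forall>v\<in>#m. is_EYd v \<longrightarrow> v = VYd i)
        then Poly_Mapping.single (m - {#VYd i#}) (Poly_Mapping.lookup q m) else 0))"

definition peval :: "('v \<Rightarrow> 'a::comm_ring_1 fps) \<Rightarrow> ('v multiset \<Rightarrow>\<^sub>0 'a) \<Rightarrow> 'a fps" where
  "peval env p = (\<Sum>m\<in>Poly_Mapping.keys p. fps_const (Poly_Mapping.lookup p m) * prod_mset (image_mset env m))"

definition env_base :: "(nat \<Rightarrow> 'a::comm_ring_1 fps) \<Rightarrow> nat \<Rightarrow> 'a fps" where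
  "env_base \<sigma> k = (if k = 0 then fps_X else \<sigma> k)"

text \<open>Substitution x := X, y_{0i} := r_{0i}, y_i := sigma_i (y_i' does not occur).\<close>
fun env_ext :: "(nat \<Rightarrow> 'a::comm_ring_1 fps) \<Rightarrow> (nat \<Rightarrow> 'a) \<Rightarrow> evar \<Rightarrow> 'a fps" where
  "env_ext \<sigma> r0 VX = fps_X"
| "env_ext \<sigma> r0 (VY i) = \<sigma> i"
| "env_ext \<sigma> r0 (VY0 i) = fps_const (r0 i)"
| "env_ext \<sigma> r0 (VYd i) = 0"

definition stream_solution :: "nat \<Rightarrow> (nat \<Rightarrow> 'a::comm_ring_1 mpoly) \<Rightarrow> (nat \<Rightarrow> 'a fps) \<Rightarrow> bool" where
  "stream_solution n P \<sigma> = (\<forall>i\<in>{1..n}. peval (env_base \<sigma>) (P i) = 0)"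

end

theory Submission
  imports Defs
begin

text \<open>Evaluating the syntactic derivative p' with y_i' := \<sigma>_i' and y_{0i} := \<sigma>_i(0) yields the
stream derivative of p(X, \<sigma>): the defining rule (y_i m)' = y_i' m + y_{0i} m' mirrors the stream
product rule (\<sigma> \<times> \<tau>)' = \<sigma>' \<times> \<tau> + \<sigma>(0) \<tau>'. For a stream solution p(X, \<sigma>) = 0, so this
evaluation vanishes. Moreover every monomial of p' contains at most one derivative variable y_j', to
the first power, so evaluating p' = q_0 + \<Sum>_j q_j y_j' splits into the claimed sum.\<close>

lemma sderiv_nth [simp]: "fps_nth (sderiv a) i = fps_nth a (Suc i)"
  by (simp add: sderiv_def)

lemma sderiv_zero [simp]: "sderiv 0 = 0"
  by (rule fps_ext) simp

lemma sderiv_one [simp]: "sderiv 1 = 0"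
  by (rule fps_ext) simp

lemma sderiv_X [simp]: "sderiv fps_X = 1"
  by (rule fps_ext) (simp add: fps_one_nth)

lemma sderiv_add: "sderiv (a + b) = sderiv a + sderiv b"
  by (rule fps_ext) simp

lemma sderiv_sum: "sderiv (\<Sum>i\<in>I. f i) = (\<Sum>i\<in>I. sderiv (f i))"
  by (induction I rule: infinite_finite_induct) (auto simp: sderiv_add fps_ext)

lemma sderiv_fps_const_mult: "sderiv (fps_const (c::'a::comm_ring_1) * a) = fps_const c * sderiv a"
  by (rule fps_ext) simp

lemma sderiv_mult:
  fixes a b :: "'a::comm_ring_1 fps"
  shows "sderiv (a * b) = sderiv a * b + fps_const (fps_nth a 0) * sderiv b"
proof (rule fps_ext)
  fix i
  have "fps_nth (sderiv (a * b)) i = (\<Sum>k=0..Suc i. fps_nth a k * fps_nth b (Suc i - k))"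
    by (simp add: fps_mult_nth)
  also have "\<dots> = fps_nth a 0 * fps_nth b (Suc i) + (\<Sum>k=0..i. fps_nth a (Suc k) * fps_nth b (i - k))"
    by (subst sum.atLeast0_atMost_Suc_shift) simp
  also have "\<dots> = fps_nth (sderiv a * b + fps_const (fps_nth a 0) * sderiv b) i"
    by (simp add: fps_mult_nth[of "sderiv a"])
  finally show "fps_nth (sderiv (a * b)) i = fps_nth (sderiv a * b + fps_const (fps_nth a 0) * sderiv b) i" .
qed

lemma poly_mapping_sum_single: "p = (\<Sum>m\<in>Poly_Mapping.keys p. Poly_Mapping.single m (Poly_Mapping.lookup p m))"
  by (rule poly_mapping_eqI) (simp add: lookup_sum lookup_single when_def in_keys_iff)

lemma peval_eq_sum_superset:
  assumes "finite S" "Poly_Mapping.keys p \<subseteq> S"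
  shows "peval env p = (\<Sum>m\<in>S. fps_const (Poly_Mapping.lookup p m) * prod_mset (image_mset env m))"
  unfolding peval_def by (rule sum.mono_neutral_left) (use assms in \<open>auto simp: in_keys_iff\<close>)

lemma peval_zero [simp]: "peval env 0 = 0"
  by (simp add: peval_def)

lemma peval_single [simp]: "peval env (Poly_Mapping.single m c) = fps_const c * prod_mset (image_mset env m)"
  by (simp add: peval_def)

lemma peval_add: "peval env (p + q) = peval env p + peval env q"
proof -
  let ?S = "Poly_Mapping.keys p \<union> Poly_Mapping.keys q"
  have "finite ?S" "Poly_Mapping.keys (p + q) \<subseteq> ?S"
    by (auto dest: keys_add[THEN subsetD])
  then show ?thesis
    using peval_eq_sum_superset[of ?S "p + q"] peval_eq_sum_superset[of ?S p] peval_eq_sum_superset[of ?S q]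
    by (simp add: lookup_add fps_const_add[symmetric] distrib_right sum.distrib del: fps_const_add)
qed

lemma peval_sum: "peval env (\<Sum>i\<in>I. f i) = (\<Sum>i\<in>I. peval env (f i))"
  by (induction I rule: infinite_finite_induct) (auto simp: peval_add)

lemma peval_single_mult:
  "peval env (Poly_Mapping.single m c * q) = peval env (Poly_Mapping.single m c) * peval env q"
proof -
  have "peval env (Poly_Mapping.single m c * q) = (\<Sum>k\<in>Poly_Mapping.keys q.
      peval env (Poly_Mapping.single (m + k) (c * Poly_Mapping.lookup q k)))"
    by (subst poly_mapping_sum_single[of q]) (simp add: sum_distrib_left mult_single peval_sum)
  also have "\<dots> = (\<Sum>k\<in>Poly_Mapping.keys q. peval env (Poly_Mapping.single m c) *
      (fps_const (Poly_Mapping.lookup q k) * prod_mset (image_mset env k)))"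
    by (simp only: peval_single fps_const_mult[symmetric] image_mset_union prod_mset.union mult_ac)
  also have "\<dots> = peval env (Poly_Mapping.single m c) * peval env q"
    by (simp only: peval_def[of env q] sum_distrib_left)
  finally show ?thesis .
qed

lemma peval_mult: "peval env (p * q) = peval env p * peval env q"
proof -
  have "peval env (p * q) = (\<Sum>m\<in>Poly_Mapping.keys p. peval env (Poly_Mapping.single m (Poly_Mapping.lookup p m)) * peval env q)"
    by (subst poly_mapping_sum_single[of p]) (simp only: sum_distrib_right peval_sum peval_single_mult)
  also have "\<dots> = peval env p * peval env q"
    by (subst (2) poly_mapping_sum_single[of p]) (simp only: peval_sum sum_distrib_right)
  finally show ?thesis .
qed

fun env_sderiv :: "(nat \<Rightarrow> 'a::comm_ring_1 fps) \<Rightarrow> (nat \<Rightarrow> 'a) \<Rightarrow> evar \<Rightarrow> 'a fps" where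
  "env_sderiv \<sigma> r0 VX = fps_X"
| "env_sderiv \<sigma> r0 (VY i) = \<sigma> i"
| "env_sderiv \<sigma> r0 (VY0 i) = fps_const (r0 i)"
| "env_sderiv \<sigma> r0 (VYd i) = sderiv (\<sigma> i)"

lemma env_sderiv_evar_of [simp]: "env_sderiv \<sigma> r0 (evar_of v) = env_base \<sigma> v"
  by (simp add: evar_of_def env_base_def)

lemma peval_emono: "peval (env_sderiv \<sigma> r0) (emono vs) = prod_list (map (env_base \<sigma>) vs)"
  by (induction vs) (simp_all add: emono_def del: single_one)

lemma peval_dvar: "peval (env_sderiv \<sigma> r0) (dvar v) = sderiv (env_base \<sigma> v)"
  by (simp add: dvar_def env_base_def del: single_one)

lemma peval_y0var: "peval (env_sderiv \<sigma> r0) (y0var v) = (if v = 0 then 0 else fps_const (r0 v))"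
  by (simp add: y0var_def del: single_one)

lemma peval_dmono:
  assumes "\<forall>v\<in>set vs. v \<noteq> 0 \<longrightarrow> r0 v = fps_nth (\<sigma> v) 0"
  shows "peval (env_sderiv \<sigma> r0) (dmono vs) = sderiv (prod_list (map (env_base \<sigma>) vs))"
  using assms
proof (induction vs rule: dmono.induct)
  case (3 v w vs)
  have "peval (env_sderiv \<sigma> r0) (y0var v) = fps_const (fps_nth (env_base \<sigma> v) 0)"
    using "3.prems" by (simp add: peval_y0var env_base_def)
  with 3 show ?case
    by (simp add: peval_add peval_mult peval_emono peval_dvar sderiv_mult)
qed (simp_all add: peval_dvar)

lemma prod_mset_image_eq_prod_list_sorted:
  "prod_mset (image_mset f m) = prod_list (map f (sorted_list_of_multiset m))"
  by (metis mset_map mset_sorted_list_of_multiset prod_mset_prod_list)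

lemma peval_sderiv_poly:
  assumes "\<forall>v\<in>pvars p. v \<noteq> 0 \<longrightarrow> r0 v = fps_nth (\<sigma> v) 0"
  shows "peval (env_sderiv \<sigma> r0) (sderiv_poly p) = sderiv (peval (env_base \<sigma>) p)"
proof -
  have "peval (env_sderiv \<sigma> r0) (dmono (sorted_list_of_multiset m)) =
      sderiv (prod_mset (image_mset (env_base \<sigma>) m))" if "m \<in> Poly_Mapping.keys p" for m
    using that assms
    by (subst peval_dmono) (auto simp: pvars_def prod_mset_image_eq_prod_list_sorted)
  then show ?thesis
    by (simp add: sderiv_poly_def peval_sum peval_mult peval_def[of "env_base \<sigma>"] sderiv_sum
        sderiv_fps_const_mult del: single_one)
qed

definition yd_part :: "evar multiset \<Rightarrow> evar multiset" where
  "yd_part m = filter_mset is_EYd m"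

definition yd_linear :: "nat \<Rightarrow> evar multiset \<Rightarrow> bool" where
  "yd_linear n m \<longleftrightarrow> yd_part m = {#} \<or> (\<exists>j\<in>{1..n}. yd_part m = {#VYd j#})"

lemma yd_part_empty_iff: "yd_part m = {#} \<longleftrightarrow> (\<forall>v\<in>#m. \<not> is_EYd v)"
  by (auto simp: yd_part_def)

lemma yd_part_single_iff:
  "yd_part m = {#VYd i#} \<longleftrightarrow> count m (VYd i) = 1 \<and> (\<forall>v\<in>#m. is_EYd v \<longrightarrow> v = VYd i)"
proof
  assume h: "yd_part m = {#VYd i#}"
  have "count m (VYd i) = count (yd_part m) (VYd i)"
    by (simp add: yd_part_def is_EYd_def)
  moreover have "v = VYd i" if "v \<in># m" "is_EYd v" for v
  proof -
    have "v \<in># yd_part m" using that by (simp add: yd_part_def)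
    then show ?thesis using h by simp
  qed
  ultimately show "count m (VYd i) = 1 \<and> (\<forall>v\<in>#m. is_EYd v \<longrightarrow> v = VYd i)"
    using h by auto
next
  assume h: "count m (VYd i) = 1 \<and> (\<forall>v\<in>#m. is_EYd v \<longrightarrow> v = VYd i)"
  show "yd_part m = {#VYd i#}"
  proof (rule multiset_eqI)
    fix v
    show "count (yd_part m) v = count {#VYd i#} v"
      using h by (cases "v = VYd i") (auto simp: yd_part_def is_EYd_def not_in_iff[symmetric])
  qed
qed

lemma yd_part_add [simp]: "yd_part (a + b) = yd_part a + yd_part b"
  by (simp add: yd_part_def)

lemma yd_linear_add:
  assumes "yd_part a = {#}" "yd_linear n b"
  shows "yd_linear n (a + b)"
  using assms by (simp add: yd_linear_def)

lemma keys_mult_yd_linear: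
  assumes "Poly_Mapping.keys p \<subseteq> {m. yd_part m = {#}}" "Poly_Mapping.keys q \<subseteq> {m. yd_linear n m}"
  shows "Poly_Mapping.keys (p * q) \<subseteq> {m. yd_linear n m}"
  using keys_mult[of p q] assms yd_linear_add by fastforce

lemma keys_emono: "Poly_Mapping.keys (emono vs) \<subseteq> {m. yd_part m = {#}}"
  by (auto simp: emono_def yd_part_empty_iff evar_of_def is_EYd_def)

lemma keys_y0var: "Poly_Mapping.keys (y0var v) \<subseteq> {m. yd_part m = {#}}"
  by (simp add: y0var_def yd_part_def is_EYd_def)

lemma keys_dvar: "v \<le> n \<Longrightarrow> Poly_Mapping.keys (dvar v) \<subseteq> {m. yd_linear n m}"
  by (auto simp: dvar_def yd_linear_def yd_part_def is_EYd_def simp del: single_one)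

lemma keys_dmono:
  "set vs \<subseteq> {0..n} \<Longrightarrow> Poly_Mapping.keys (dmono vs :: 'a::comm_ring_1 epoly) \<subseteq> {m. yd_linear n m}"
proof (induction vs rule: dmono.induct)
  case (3 v w vs)
  have "Poly_Mapping.keys (emono (w # vs) * dvar v :: 'a epoly) \<subseteq> {m. yd_linear n m}"
    using "3.prems" by (intro keys_mult_yd_linear keys_emono keys_dvar) simp
  moreover have "Poly_Mapping.keys (y0var v * dmono (w # vs) :: 'a epoly) \<subseteq> {m. yd_linear n m}"
    using 3 by (intro keys_mult_yd_linear keys_y0var) simp
  ultimately show ?case
    using keys_add[of "dvar v * emono (w # vs) :: 'a epoly" "y0var v * dmono (w # vs)"] by (auto simp: mult.commute)
qed (use keys_dvar in auto)

lemma keys_sderiv_poly: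
  assumes "pvars p \<subseteq> {0..n}"
  shows "Poly_Mapping.keys (sderiv_poly p) \<subseteq> {m. yd_linear n m}"
proof -
  have "Poly_Mapping.keys (Poly_Mapping.single {#} (Poly_Mapping.lookup p m) * dmono (sorted_list_of_multiset m))
      \<subseteq> {m. yd_linear n m}" if "m \<in> Poly_Mapping.keys p" for m
    using that assms
    by (intro keys_mult_yd_linear keys_dmono) (auto simp: yd_part_def pvars_def)
  then show ?thesis
    unfolding sderiv_poly_def using keys_sum by fastforce
qed

definition yd_free_part :: "'a::comm_ring_1 epoly \<Rightarrow> 'a epoly" where
  "yd_free_part q = (\<Sum>m\<in>Poly_Mapping.keys q.
     if yd_part m = {#} then Poly_Mapping.single m (Poly_Mapping.lookup q m) else 0)"

definition yd_coeff :: "'a::comm_ring_1 epoly \<Rightarrow> nat \<Rightarrow> 'a epoly" where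
  "yd_coeff q j = (\<Sum>m\<in>Poly_Mapping.keys q.
     if yd_part m = {#VYd j#} then Poly_Mapping.single (m - {#VYd j#}) (Poly_Mapping.lookup q m) else 0)"

lemma eth_x_eq_yd_free_part: "eth_x p = yd_free_part (sderiv_poly p)"
  by (simp add: eth_x_def Let_def yd_free_part_def yd_part_empty_iff)

lemma eth_y_eq_yd_coeff: "eth_y p j = yd_coeff (sderiv_poly p) j"
  by (simp add: eth_y_def Let_def yd_coeff_def yd_part_single_iff)

lemma env_sderiv_eq_env_ext: "\<not> is_EYd v \<Longrightarrow> env_sderiv \<sigma> r0 v = env_ext \<sigma> r0 v"
  by (cases v) (auto simp: is_EYd_def)

lemma image_env_sderiv_eq_env_ext:
  "yd_part m = {#} \<Longrightarrow> image_mset (env_sderiv \<sigma> r0) m = image_mset (env_ext \<sigma> r0) m"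
  by (rule image_mset_cong) (simp add: yd_part_empty_iff env_sderiv_eq_env_ext)

lemma prod_env_sderiv_yd_single:
  assumes "yd_part m = {#VYd j#}"
  shows "prod_mset (image_mset (env_sderiv \<sigma> r0) m) =
    prod_mset (image_mset (env_ext \<sigma> r0) (m - {#VYd j#})) * sderiv (\<sigma> j)"
proof -
  have "VYd j \<in># yd_part m"
    using assms by simp
  then have m: "m = add_mset (VYd j) (m - {#VYd j#})"
    by (simp add: yd_part_def)
  have "yd_part m = yd_part (m - {#VYd j#}) + {#VYd j#}"
    by (subst m) (simp add: yd_part_def is_EYd_def)
  then have "yd_part (m - {#VYd j#}) = {#}"
    using assms by simp
  then show ?thesis
    by (subst m) (simp add: image_env_sderiv_eq_env_ext)
qed

lemma prod_env_sderiv_split: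
  assumes "yd_linear n m"
  shows "prod_mset (image_mset (env_sderiv \<sigma> r0) m) =
    (\<Sum>j=1..n. if yd_part m = {#VYd j#}
       then prod_mset (image_mset (env_ext \<sigma> r0) (m - {#VYd j#})) * sderiv (\<sigma> j) else 0)
    + (if yd_part m = {#} then prod_mset (image_mset (env_ext \<sigma> r0) m) else 0)"
  using assms unfolding yd_linear_def
proof (elim disjE bexE)
  assume "yd_part m = {#}"
  then show ?thesis by (simp add: image_env_sderiv_eq_env_ext)
next
  fix j0 assume j0: "j0 \<in> {1..n}" "yd_part m = {#VYd j0#}"
  then have "yd_part m = {#VYd j#} \<longleftrightarrow> j = j0" "yd_part m \<noteq> {#}" for j
    by auto
  with j0 show ?thesis
    by (simp add: prod_env_sderiv_yd_single[OF j0(2)])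
qed

lemma peval_env_sderiv_split:
  assumes "Poly_Mapping.keys q \<subseteq> {m. yd_linear n m}"
  shows "peval (env_sderiv \<sigma> r0) q =
    (\<Sum>j=1..n. peval (env_ext \<sigma> r0) (yd_coeff q j) * sderiv (\<sigma> j))
    + peval (env_ext \<sigma> r0) (yd_free_part q)"
proof -
  let ?c = "\<lambda>m. fps_const (Poly_Mapping.lookup q m)"
  let ?e = "\<lambda>m. prod_mset (image_mset (env_ext \<sigma> r0) m)"
  have "peval (env_sderiv \<sigma> r0) q = (\<Sum>m\<in>Poly_Mapping.keys q.
      (\<Sum>j=1..n. if yd_part m = {#VYd j#} then ?c m * ?e (m - {#VYd j#}) * sderiv (\<sigma> j) else 0)
      + (if yd_part m = {#} then ?c m * ?e m else 0))"
    unfolding peval_def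
  proof (rule sum.cong[OF refl])
    fix m assume "m \<in> Poly_Mapping.keys q"
    then have "yd_linear n m" using assms by blast
    then show "?c m * prod_mset (image_mset (env_sderiv \<sigma> r0) m) =
      (\<Sum>j=1..n. if yd_part m = {#VYd j#} then ?c m * ?e (m - {#VYd j#}) * sderiv (\<sigma> j) else 0)
      + (if yd_part m = {#} then ?c m * ?e m else 0)"
      by (auto simp: prod_env_sderiv_split distrib_left sum_distrib_left mult.assoc intro!: sum.cong)
  qed
  also have "\<dots> = (\<Sum>j=1..n. \<Sum>m\<in>Poly_Mapping.keys q.
      if yd_part m = {#VYd j#} then ?c m * ?e (m - {#VYd j#}) * sderiv (\<sigma> j) else 0)
      + (\<Sum>m\<in>Poly_Mapping.keys q. if yd_part m = {#} then ?c m * ?e m else 0)"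
    by (simp only: sum.distrib sum.swap[of _ "Poly_Mapping.keys q"])
  also have "\<dots> = (\<Sum>j=1..n. peval (env_ext \<sigma> r0) (yd_coeff q j) * sderiv (\<sigma> j))
      + peval (env_ext \<sigma> r0) (yd_free_part q)"
    by (simp add: yd_coeff_def yd_free_part_def peval_sum sum_distrib_right if_distrib if_distribR cong: if_cong)
  finally show ?thesis .
qed

theorem lemma3p6:
  fixes n :: nat
    and P :: "nat \<Rightarrow> 'a::field_char_0 mpoly"
    and \<sigma> :: "nat \<Rightarrow> 'a fps"
    and r0 :: "nat \<Rightarrow> 'a"
  assumes "\<forall>i\<in>{1..n}. pvars (P i) \<subseteq> {0..n}"
    and "stream_solution n P \<sigma>"
    and "\<forall>j\<in>{1..n}. r0 j = fps_nth (\<sigma> j) 0"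
  shows "\<forall>i\<in>{1..n}.
     (\<Sum>j=1..n. peval (env_ext \<sigma> r0) (eth_y (P i) j) * sderiv (\<sigma> j))
       + peval (env_ext \<sigma> r0) (eth_x (P i)) = 0"
proof
  fix i assume i: "i \<in> {1..n}"
  have vars: "pvars (P i) \<subseteq> {0..n}"
    using assms(1) i by blast
  then have "\<forall>v\<in>pvars (P i). v \<noteq> 0 \<longrightarrow> r0 v = fps_nth (\<sigma> v) 0"
    using assms(3) by fastforce
  then have "peval (env_sderiv \<sigma> r0) (sderiv_poly (P i)) = sderiv (peval (env_base \<sigma>) (P i))"
    by (rule peval_sderiv_poly)
  also have "\<dots> = 0"
    using assms(2) i by (simp add: stream_solution_def)
  finally show "(\<Sum>j=1..n. peval (env_ext \<sigma> r0) (eth_y (P i) j) * sderiv (\<sigma> j))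
       + peval (env_ext \<sigma> r0) (eth_x (P i)) = 0"
    using peval_env_sderiv_split[OF keys_sderiv_poly[OF vars]]
    by (simp add: eth_x_eq_yd_free_part eth_y_eq_yd_coeff)
qed

end
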